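(* For every positive integer $n$, \[ e^n=\sum_{k=0}^{n-1}\frac{n^k}{k!}+\frac{n^{n-1}}{(n-1)!}\left(1+n+\mathop{\mathrm{K}}_{m=1}^{\infty}\left(\frac{-n(m+n-1)}{m+2n+1}\right)\right), \] where in particular the continued fraction converges.
   Context: For sequences $(a_m)_{m\ge1}$, $(b_m)_{m\ge1}$ of complex numbers, $\mathop{\mathrm{K}}_{m=1}^{\infty}\left(\frac{a_m}{b_m}\right)$ denotes the continued fraction $\cfrac{a_1}{b_1+\cfrac{a_2}{b_2+\cfrac{a_3}{b_3+\cdots}}}$, whose value is the limit as $k\to\infty$ of its $k$-th approximants $\cfrac{a_1}{b_1+\cfrac{a_2}{\ddots+\cfrac{a_k}{b_k}}}$ (the $0$-th approximant being $0$). Here $a_m=-n(m+n-1)$ and $b_m=m+2n+1$. *)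

theory Defs
  imports "HOL-Analysis.Analysis"
begin

text \<open>k-th approximant of the continued fraction K_{m=1}^\<infinity> (a m / b m):
  a 1 / (b 1 + a 2 / (... + a k / b k)); the 0-th approximant is 0.\<close>
definition cf_approx :: "(nat \<Rightarrow> 'a::field) \<Rightarrow> (nat \<Rightarrow> 'a) \<Rightarrow> nat \<Rightarrow> 'a" where
  "cf_approx a b k = foldr (\<lambda>m acc. a m / (b m + acc)) [1..<k+1] 0"

definition cf_converges_to :: "(nat \<Rightarrow> 'a::{field,topological_space}) \<Rightarrow> (nat \<Rightarrow> 'a) \<Rightarrow> 'a \<Rightarrow> bool" where
  "cf_converges_to a b L \<longleftrightarrow> (cf_approx a b \<longlongrightarrow> L) sequentially"

end

theory Submission
  imports Defs
begin

text \<open>The approximants of the continued fraction have denominators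
  \<open>B k = (k + 1) (n + k)! / n!\<close>, and by Euler's correspondence between continued fractions
  and series they are the partial sums of \<open>\<Sum>j. d j\<close> with
  \<open>d j = - n^(j + 2) / ((j + 1) B (j + 1))\<close>. Multiplied by \<open>n^n / n!\<close>, each \<open>d j\<close> becomes
  a difference \<open>w (j + 1) - w j\<close>, where \<open>w j\<close> is a partial sum of the exponential series at
  \<open>n\<close> plus a correction term tending to 0. So the series telescopes to \<open>e^n - w 0\<close>, which
  yields both the convergence and the value of the continued fraction.\<close>

text \<open>The set \<open>D\<close> of admissible tails keeps every denominator nonzero, so no junk division by
  zero occurs.\<close>

lemma cf_foldr_tail_eq:
  fixes a b A B :: "nat \<Rightarrow> 'a::field" and D :: "'a set"
  assumes A_init: "A 0 = 0" "A 1 = a 1" and B_init: "B 0 = 1" "B 1 = b 1"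
    and A_rec: "\<And>k. A (k + 2) = b (k + 2) * A (k + 1) + a (k + 2) * A k"
    and B_rec: "\<And>k. B (k + 2) = b (k + 2) * B (k + 1) + a (k + 2) * B k"
    and denom_nz: "\<And>m w. w \<in> D \<Longrightarrow> b m + w \<noteq> 0"
    and D_closed: "\<And>m w. w \<in> D \<Longrightarrow> a m / (b m + w) \<in> D"
    and "w \<in> D"
  shows "foldr (\<lambda>m acc. a m / (b m + acc)) [1..<k + 2] w
           = (A (k + 1) + A k * w) / (B (k + 1) + B k * w)"
  using \<open>w \<in> D\<close>
proof (induction k arbitrary: w)
  case 0
  then show ?case using A_init B_init by simp
next
  case (Suc k)
  let ?F = "\<lambda>k w. foldr (\<lambda>m acc. a m / (b m + acc)) [1..<k + 2] w"
  define c where "c = b (k + 2) + w"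
  have "c \<noteq> 0" using denom_nz Suc.prems by (simp add: c_def)
  have "?F (Suc k) w = ?F k (a (k + 2) / c)"
    by (simp add: c_def)
  also have "\<dots> = (A (k + 1) + A k * (a (k + 2) / c)) / (B (k + 1) + B k * (a (k + 2) / c))"
    using Suc.IH D_closed Suc.prems by (simp add: c_def)
  also have "\<dots> = (A (k + 1) * c + a (k + 2) * A k) / (B (k + 1) * c + a (k + 2) * B k)"
  proof -
    have "x + y * (a (k + 2) / c) = (x * c + a (k + 2) * y) / c" for x y
      using \<open>c \<noteq> 0\<close> by (simp add: field_simps)
    then show ?thesis using \<open>c \<noteq> 0\<close> by simp
  qed
  also have "\<dots> = (A (k + 2) + A (k + 1) * w) / (B (k + 2) + B (k + 1) * w)"
    using A_rec[of k] B_rec[of k] by (simp add: c_def algebra_simps)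
  finally show ?case by (simp add: numeral_2_eq_2)
qed

lemma cf_approx_eq_partial_sums:
  fixes a b B d :: "nat \<Rightarrow> 'a::field" and D :: "'a set"
  assumes B_init: "B 0 = 1" "B 1 = b 1"
    and B_rec: "\<And>k. B (k + 2) = b (k + 2) * B (k + 1) + a (k + 2) * B k"
    and B_nz: "\<And>k. B k \<noteq> 0"
    and d_init: "B 1 * d 0 = a 1"
    and d_rec: "\<And>k. B (k + 2) * d (k + 1) + a (k + 2) * B k * d k = 0"
    and "0 \<in> D"
    and denom_nz: "\<And>m w. w \<in> D \<Longrightarrow> b m + w \<noteq> 0"
    and D_closed: "\<And>m w. w \<in> D \<Longrightarrow> a m / (b m + w) \<in> D"
  shows "cf_approx a b k = (\<Sum>j<k. d j)"
proof -
  define A where "A k = B k * (\<Sum>j<k. d j)" for k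
  \<comment> \<open>\<open>d_rec\<close> is exactly what makes these numerators satisfy the three-term recurrence.\<close>
  have A_rec: "A (k + 2) = b (k + 2) * A (k + 1) + a (k + 2) * A k" for k
  proof -
    let ?S = "\<Sum>j<k + 1. d j"
    have "A (k + 2) - b (k + 2) * A (k + 1) - a (k + 2) * A k
        = ?S * (B (k + 2) - b (k + 2) * B (k + 1) - a (k + 2) * B k)
          + (B (k + 2) * d (k + 1) + a (k + 2) * B k * d k)"
      by (simp add: A_def numeral_2_eq_2 algebra_simps)
    also have "\<dots> = 0"
      using B_rec[of k] d_rec[of k] by simp
    finally show ?thesis by (simp add: diff_eq_eq add.commute)
  qed
  show ?thesis
  proof (cases k)
    case 0
    then show ?thesis by (simp add: cf_approx_def)
  next
    case (Suc k')
    have "cf_approx a b k = foldr (\<lambda>m acc. a m / (b m + acc)) [1..<k' + 2] 0"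
      by (simp add: cf_approx_def Suc)
    also have "\<dots> = (A (k' + 1) + A k' * 0) / (B (k' + 1) + B k' * 0)"
      by (rule cf_foldr_tail_eq[where D = D])
        (use B_init d_init A_rec B_rec denom_nz D_closed \<open>0 \<in> D\<close> in \<open>simp_all add: A_def\<close>)
    also have "\<dots> = (\<Sum>j<k. d j)"
      using B_nz Suc by (simp add: A_def)
    finally show ?thesis .
  qed
qed

definition exp_cf_denom :: "nat \<Rightarrow> nat \<Rightarrow> real" where
  "exp_cf_denom n k = (real k + 1) * fact (n + k) / fact n"

definition exp_cf_term :: "nat \<Rightarrow> nat \<Rightarrow> real" where
  "exp_cf_term n j = - (real n ^ (j + 2) / ((real j + 1) * exp_cf_denom n (j + 1)))"

lemma exp_cf_denom_pos: "exp_cf_denom n k > 0"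
  by (simp add: exp_cf_denom_def)

lemma exp_cf_denom_Suc:
  "(real k + 1) * exp_cf_denom n (Suc k) = (real k + 2) * (real n + real k + 1) * exp_cf_denom n k"
  by (simp add: exp_cf_denom_def field_simps)

lemma exp_cf_denom_rec:
  "exp_cf_denom n (k + 2) = (real (k + 2) + 2 * real n + 1) * exp_cf_denom n (k + 1)
     + (- real n * (real (k + 2) + real n - 1)) * exp_cf_denom n k"
proof -
  define G where "G = fact (n + k) / (fact n :: real)"
  have "exp_cf_denom n k = (real k + 1) * G"
    by (simp add: exp_cf_denom_def G_def)
  moreover have "exp_cf_denom n (k + 1) = (real k + 2) * (real n + real k + 1) * G"
    by (simp add: exp_cf_denom_def G_def field_simps)
  moreover have "exp_cf_denom n (k + 2)
      = (real k + 3) * (real n + real k + 2) * (real n + real k + 1) * G"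
    by (simp add: exp_cf_denom_def G_def numeral_2_eq_2 numeral_3_eq_3 field_simps)
  ultimately show ?thesis
    by (simp add: algebra_simps)
qed

lemma exp_cf_term_rec:
  "exp_cf_denom n (k + 2) * exp_cf_term n (k + 1)
     + (- real n * (real (k + 2) + real n - 1)) * exp_cf_denom n k * exp_cf_term n k = 0"
proof -
  let ?B = "exp_cf_denom n"
  have "?B (k + 2) * exp_cf_term n (k + 1) = - (real n ^ (k + 3) / (real k + 2))"
    using exp_cf_denom_pos[of n "k + 2"]
    by (simp add: exp_cf_term_def add_nonneg_pos eval_nat_numeral)
  moreover have "(- real n * (real (k + 2) + real n - 1)) * ?B k * exp_cf_term n k
      = real n ^ (k + 3) / (real k + 2)"
  proof -
    have "(- real n * (real (k + 2) + real n - 1)) * ?B k * exp_cf_term n k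
        = real n * (real n + real k + 1) * ?B k * (real n ^ (k + 2) / ((real k + 1) * ?B (k + 1)))"
      by (simp add: exp_cf_term_def algebra_simps)
    also have "\<dots> = real n * (real n + real k + 1) * ?B k * real n ^ (k + 2)
        / ((real k + 2) * (real n + real k + 1) * ?B k)"
      using exp_cf_denom_Suc[of k n] by simp
    also have "\<dots> = real n ^ (k + 3) / (real k + 2)"
      using exp_cf_denom_pos[of n k] by (simp add: eval_nat_numeral add_nonneg_pos)
    finally show ?thesis .
  qed
  ultimately show ?thesis by simp
qed

lemma cf_approx_exp_cf:
  "cf_approx (\<lambda>m. - real n * (real m + real n - 1)) (\<lambda>m. real m + 2 * real n + 1) k
     = (\<Sum>j<k. exp_cf_term n j)"
proof (rule cf_approx_eq_partial_sums[where D = "{- real n..}"])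
  show "exp_cf_denom n 1 * exp_cf_term n 0 = - real n * (real 1 + real n - 1)"
    using exp_cf_denom_pos[of n 1] by (simp add: exp_cf_term_def power2_eq_square)
  fix m and w :: real
  assume "w \<in> {- real n..}"
  then have c: "real m + 2 * real n + 1 + w \<ge> real m + real n + 1" (is "?c \<ge> _")
    by simp
  then have "?c > 0"
    by linarith
  then show "?c \<noteq> 0"
    by simp
  have "real n * (real m + real n - 1) \<le> real n * ?c"
    using c by (intro mult_left_mono) auto
  with \<open>?c > 0\<close> show "- real n * (real m + real n - 1) / ?c \<in> {- real n..}"
    by (simp add: pos_divide_le_eq)
qed (use exp_cf_denom_pos exp_cf_denom_rec exp_cf_term_rec in
      \<open>simp_all add: exp_cf_denom_def less_le\<close>)

definition exp_cf_telescope :: "nat \<Rightarrow> nat \<Rightarrow> real" where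
  "exp_cf_telescope n j = (\<Sum>i<n + j + 2. real n ^ i / fact i)
     + real n ^ (n + j + 2) / ((real j + 1) * fact (n + j + 1))"

lemma exp_cf_term_telescope:
  "real n ^ n / fact n * exp_cf_term n j = exp_cf_telescope n (Suc j) - exp_cf_telescope n j"
proof -
  define P where "P = real n ^ (n + j + 2) / fact (n + j + 1)"
  define X where "X = real n ^ (n + j + 2) / fact (n + j + 2)"
  have "real n + real j + 2 \<noteq> 0"
    by (simp add: add_nonneg_pos)
  moreover have "fact (n + j + 2) = (real n + real j + 2) * (fact (n + j + 1) :: real)"
    using fact_Suc[of "n + j + 1"] by (simp add: add_ac)
  ultimately have X: "(real n + real j + 2) * X = P"
    unfolding X_def P_def by (metis mult_divide_mult_cancel_left_if times_divide_eq_right)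
  have "(\<Sum>i<n + Suc j + 2. real n ^ i / fact i) = (\<Sum>i<n + j + 2. real n ^ i / fact i) + X"
    by (simp add: X_def)
  moreover have "real n ^ (n + Suc j + 2) / ((real (Suc j) + 1) * fact (n + Suc j + 1))
      = real n * X / (real j + 2)"
    by (simp add: X_def algebra_simps)
  moreover have "real n ^ (n + j + 2) / ((real j + 1) * fact (n + j + 1)) = P / (real j + 1)"
    by (simp add: P_def)
  ultimately have "exp_cf_telescope n (Suc j) - exp_cf_telescope n j
      = X + real n * X / (real j + 2) - (real n + real j + 2) * X / (real j + 1)"
    by (simp add: exp_cf_telescope_def X)
  also have "\<dots> = - ((real n + real j + 2) * X) / ((real j + 1) * (real j + 2))"
    by (simp add: field_simps add_nonneg_pos)
  also have "\<dots> = - P / ((real j + 1) * (real j + 2))"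
    by (simp only: X)
  also have "\<dots> = real n ^ n / fact n * exp_cf_term n j"
    by (simp add: exp_cf_term_def exp_cf_denom_def P_def power_add algebra_simps)
  finally show ?thesis ..
qed

lemma exp_cf_telescope_0:
  "exp_cf_telescope n 0 = (\<Sum>k<n. real n ^ k / fact k) + real n ^ n / fact n * (1 + real n)"
proof -
  have "real n ^ Suc n / fact (Suc n) + real n ^ (n + 2) / fact (Suc n)
      = real n ^ Suc n * (real n + 1) / ((real n + 1) * fact n)"
    by (simp add: eval_nat_numeral add_divide_distrib algebra_simps)
  also have "\<dots> = real n ^ n / fact n * real n"
    by (simp add: add_nonneg_pos)
  finally show ?thesis
    by (simp add: exp_cf_telescope_def eval_nat_numeral algebra_simps add_divide_distrib)
qed

lemma exp_cf_telescope_tendsto: "exp_cf_telescope n \<longlonglongrightarrow> exp (real n)"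
proof -
  have exp_series: "(\<lambda>k. real n ^ k / fact k) sums exp (real n)"
    using exp_converges[of "real n"] by (simp add: divide_inverse_commute)
  have "(\<lambda>j. (\<Sum>i<j + (n + 2). real n ^ i / fact i)
          + real n ^ (j + (n + 1)) / fact (j + (n + 1)) * (real n / (real j + 1)))
      \<longlonglongrightarrow> exp (real n) + 0 * 0"
  proof (intro tendsto_add tendsto_mult)
    show "(\<lambda>j. \<Sum>i<j + (n + 2). real n ^ i / fact i) \<longlonglongrightarrow> exp (real n)"
      using exp_series unfolding sums_def by (rule LIMSEQ_ignore_initial_segment)
    show "(\<lambda>j. real n ^ (j + (n + 1)) / fact (j + (n + 1))) \<longlonglongrightarrow> 0"
      using summable_LIMSEQ_zero[OF sums_summable[OF exp_series]]
      by (rule LIMSEQ_ignore_initial_segment)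
    show "(\<lambda>j. real n / (real j + 1)) \<longlonglongrightarrow> 0"
      using tendsto_mult[OF tendsto_const LIMSEQ_inverse_real_of_nat, of "real n"]
      by (simp add: divide_inverse add.commute)
  qed
  moreover have "exp_cf_telescope n = (\<lambda>j. (\<Sum>i<j + (n + 2). real n ^ i / fact i)
          + real n ^ (j + (n + 1)) / fact (j + (n + 1)) * (real n / (real j + 1)))"
    by (simp add: fun_eq_iff exp_cf_telescope_def ac_simps)
  ultimately show ?thesis
    by simp
qed

lemma exp_cf_term_scaled_sums:
  "(\<lambda>j. real n ^ n / fact n * exp_cf_term n j)
     sums (exp (real n) - (\<Sum>k<n. real n ^ k / fact k) - real n ^ n / fact n * (1 + real n))"
  using telescope_sums[OF exp_cf_telescope_tendsto[of n]]
  by (simp only: exp_cf_term_telescope exp_cf_telescope_0 diff_diff_eq)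

theorem theorem2p1:
  fixes n :: nat
  assumes "n \<ge> 1"
  shows "\<exists>L::real.
    cf_converges_to (\<lambda>m. - real n * (real m + real n - 1)) (\<lambda>m. real m + 2 * real n + 1) L \<and>
    exp (real n) = (\<Sum>k<n. real n ^ k / fact k)
                   + real n ^ (n - 1) / fact (n - 1) * (1 + real n + L)"
proof -
  define c where "c = real n ^ n / fact n"
  define L where "L = (exp (real n) - (\<Sum>k<n. real n ^ k / fact k) - c * (1 + real n)) / c"
  have "c > 0"
    using assms by (simp add: c_def)
  have c_eq: "real n ^ (n - 1) / fact (n - 1) = c"
    using assms by (cases n) (simp_all add: c_def)
  have "exp_cf_term n sums L"
    unfolding L_def using \<open>c > 0\<close>
    by (intro sums_mult_D[OF exp_cf_term_scaled_sums[of n, folded c_def]]) simp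
  then have "cf_converges_to (\<lambda>m. - real n * (real m + real n - 1)) (\<lambda>m. real m + 2 * real n + 1) L"
    unfolding cf_converges_to_def cf_approx_exp_cf sums_def .
  moreover have "exp (real n) = (\<Sum>k<n. real n ^ k / fact k) + c * (1 + real n + L)"
    using \<open>c > 0\<close> by (simp add: L_def field_simps)
  ultimately show ?thesis
    unfolding c_eq by blast
qed

end
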